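(* Let $A\in\mathbf{bal}$ and let $e:A\to A^\sigma$ be its canonical extension. Then for every basic algebra $C$ and every $\mathbf{bal}$-morphism $\alpha:A\to C$ there is a unique normal homomorphism $\gamma:A^\sigma\to C$ with $\gamma\circ e=\alpha$. Hence $A\mapsto A^\sigma$ is a reflector and $\mathbf{balg}$ is a (non-full) reflective subcategory of $\mathbf{bal}$.
   Context: An $\ell$-algebra is a commutative unital $\mathbb{R}$-algebra with a lattice order compatible with addition, with products and nonnegative scalar multiples of nonnegative elements nonnegative. It is bounded if each $a\le n\cdot1$ for some $n\in\mathbb{N}$, archimedean if $n\cdot a\le b$ for all $n$ implies $a\le0$. $\mathbf{bal}$ is the category of bounded archimedean $\ell$-algebras and unital $\ell$-algebra homomorphisms. An $\ell$-algebra is Dedekind complete if every subset bounded above has a least upper bound. The idempotents $\mathrm{Id}(A)$ form a boolean algebra with $e\vee f=e+f-ef$, $e\wedge f=ef$, $\neg e=1-e$. A basic algebra is a Dedekind complete $A\in\mathbf{bal}$ with $\mathrm{Id}(A)$ atomic. A normal homomorphism between basic algebras is a $\mathbf{bal}$-morphism preserving all existing joins and meets; $\mathbf{balg}$ is the category of basic algebras and normal homomorphisms. A canonical extension of $A\in\mathbf{bal}$ is a basic algebra $A^\sigma$ with a $\mathbf{bal}$-monomorphism $e:A\to A^\sigma$ such that (Density) every element of $A^\sigma$ is a join of meets of elements of $e[A]$, and (Compactness) for $S,T\subseteq A$ and real $\varepsilon>0$, $\bigwedge e[S]+\varepsilon\le\bigvee e[T]$ implies $\bigwedge e[S']\le\bigvee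 e[T']$ for some finite $S'\subseteq S$, $T'\subseteq T$. Every $A\in\mathbf{bal}$ has a canonical extension, unique up to isomorphism, namely the algebra $B(Y_A)$ of all bounded real functions on the set $Y_A$ of maximal $\ell$-ideals of $A$, with $e(a)(M)=r$ where $a+M=r+M$. *)

theory Defs
  imports Complex_Main "HOL-Library.Lattice_Algebras"
begin

class bal = comm_ring_1 + real_algebra_1 + lattice_ab_group_add +
  assumes bal_mult_nonneg: "0 \<le> a \<Longrightarrow> 0 \<le> b \<Longrightarrow> 0 \<le> a * b"
  and bal_scaleR_nonneg: "0 \<le> r \<Longrightarrow> 0 \<le> a \<Longrightarrow> 0 \<le> r *\<^sub>R a"
  and bal_bounded: "\<exists>n::nat. a \<le> of_nat n * 1"
  and bal_archimedean: "(\<And>n::nat. of_nat n * a \<le> b) \<Longrightarrow> a \<le> 0"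

definition is_join :: "'a::order set \<Rightarrow> 'a \<Rightarrow> bool" where
  "is_join S x \<longleftrightarrow> (\<forall>s\<in>S. s \<le> x) \<and> (\<forall>y. (\<forall>s\<in>S. s \<le> y) \<longrightarrow> x \<le> y)"

definition is_meet :: "'a::order set \<Rightarrow> 'a \<Rightarrow> bool" where
  "is_meet S x \<longleftrightarrow> (\<forall>s\<in>S. x \<le> s) \<and> (\<forall>y. (\<forall>s\<in>S. y \<le> s) \<longrightarrow> y \<le> x)"

text \<open>Idempotents form a boolean algebra with meet e*f, bottom 0; its order is
  e \<le> f iff e*f = e.  Atoms and atomicity w.r.t. this boolean algebra.\<close>

definition idempotents :: "'a::ring_1 set" where
  "idempotents = {e. e * e = e}"

definition idem_atom :: "'a::ring_1 \<Rightarrow> bool" where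
  "idem_atom a \<longleftrightarrow> a \<in> idempotents \<and> a \<noteq> 0 \<and>
     (\<forall>f\<in>idempotents. f * a = f \<longrightarrow> f = 0 \<or> f = a)"

class basic = bal +
  assumes basic_dedekind_complete:
    "S \<noteq> {} \<Longrightarrow> (\<exists>u. \<forall>s\<in>S. s \<le> u) \<Longrightarrow>
     \<exists>x. (\<forall>s\<in>S. s \<le> x) \<and> (\<forall>y. (\<forall>s\<in>S. s \<le> y) \<longrightarrow> x \<le> y)"
  and basic_idem_atomic:
    "e * e = e \<Longrightarrow> e \<noteq> 0 \<Longrightarrow>
     \<exists>a. (a * a = a \<and> a \<noteq> 0 \<and> (\<forall>f. f * f = f \<and> f * a = f \<longrightarrow> f = 0 \<or> f = a))
         \<and> a * e = a"

lemma basic_dedekind_complete':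
  "S \<noteq> {} \<Longrightarrow> (\<exists>u. \<forall>s\<in>S. s \<le> u) \<Longrightarrow> \<exists>x::'a::basic. is_join S x"
  unfolding is_join_def by (rule basic_dedekind_complete)

definition bal_hom :: "('a::bal \<Rightarrow> 'b::bal) \<Rightarrow> bool" where
  "bal_hom f \<longleftrightarrow>
     (\<forall>x y. f (x + y) = f x + f y) \<and>
     (\<forall>x y. f (x * y) = f x * f y) \<and>
     (\<forall>r x. f (r *\<^sub>R x) = r *\<^sub>R f x) \<and>
     f 1 = 1 \<and>
     (\<forall>x y. f (sup x y) = sup (f x) (f y)) \<and>
     (\<forall>x y. f (inf x y) = inf (f x) (f y))"

definition normal_hom :: "('a::basic \<Rightarrow> 'b::basic) \<Rightarrow> bool" where
  "normal_hom f \<longleftrightarrow> bal_hom f \<and>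
     (\<forall>S x. is_join S x \<longrightarrow> is_join (f ` S) (f x)) \<and>
     (\<forall>S x. is_meet S x \<longrightarrow> is_meet (f ` S) (f x))"

definition canonical_extension :: "('a::bal \<Rightarrow> 'b::basic) \<Rightarrow> bool" where
  "canonical_extension e \<longleftrightarrow>
     bal_hom e \<and> inj e \<and>
     \<comment> \<open>Density: every element is a join of meets of elements of e[A]\<close>
     (\<forall>x::'b. \<exists>\<S>::'a set set.
        (\<forall>S\<in>\<S>. \<exists>m. is_meet (e ` S) m) \<and>
        is_join {m. \<exists>S\<in>\<S>. is_meet (e ` S) m} x) \<and>
     \<comment> \<open>Compactness\<close>
     (\<forall>(S::'a set) (T::'a set) (\<epsilon>::real) m j.
        \<epsilon> > 0 \<longrightarrow> is_meet (e ` S) m \<longrightarrow> is_join (e ` T) j \<longrightarrow> m + of_real \<epsilon> \<le> j \<longrightarrow>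
        (\<exists>S' T' m' j'. finite S' \<and> S' \<subseteq> S \<and> finite T' \<and> T' \<subseteq> T \<and>
           is_meet (e ` S') m' \<and> is_join (e ` T') j' \<and> m' \<le> j'))"

end

theory Submission
  imports Defs
begin

text \<open>
  A basic algebra \<open>C\<close> is the algebra of bounded real functions on its set of atoms: every atom
  \<open>q\<close> yields a real point \<open>c \<mapsto> c(q)\<close> with \<open>q c = c(q) q\<close>, these points separate elements,
  existing joins and meets are computed pointwise, and every bounded family of values is attained.
  Compactness of the canonical extension shows that every real point \<open>\<chi>\<close> of \<open>A\<close> factors as
  \<open>e\<close> followed by some atom \<open>p\<close> of \<open>A\<^sup>\<sigma>\<close>: the meet of the \<open>e a\<close> with \<open>0 \<le> a \<le> 1\<close> and
  \<open>\<chi> a = 1\<close> is nonzero, and any atom below it does the job.  Hence every atom \<open>q\<close> of \<open>C\<close> picks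
  an atom \<open>P q\<close> of \<open>A\<^sup>\<sigma>\<close> representing \<open>\<alpha>\<close> followed by \<open>q\<close>, and \<open>\<gamma> x\<close> is the element of \<open>C\<close>
  whose value at \<open>q\<close> is \<open>x(P q)\<close>; it is normal since joins and meets are pointwise.  Uniqueness
  follows from density, since normal homomorphisms preserve joins of meets.
\<close>

section \<open>Order structure of bounded archimedean l-algebras\<close>

subclass (in bal) ordered_comm_ring
proof
  show "c * a \<le> c * b" if "a \<le> b" "0 \<le> c" for a b c :: 'a
    using bal_mult_nonneg[of c "b - a"] that by (simp add: algebra_simps)
qed

instance bal \<subseteq> ordered_real_vector
proof
  fix x y :: "'a::bal" and a b :: real
  show "x \<le> y \<Longrightarrow> 0 \<le> a \<Longrightarrow> a *\<^sub>R x \<le> a *\<^sub>R y"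
    using bal_scaleR_nonneg[of a "y - x"] by (simp add: scaleR_diff_right)
  show "a \<le> b \<Longrightarrow> 0 \<le> x \<Longrightarrow> a *\<^sub>R x \<le> b *\<^sub>R x"
    using bal_scaleR_nonneg[of "b - a" x] by (simp add: scaleR_diff_left)
qed

lemma bal_zero_le_one: "0 \<le> (1::'a::bal)"
proof -
  obtain n :: nat where "- 1 \<le> of_nat n * (1::'a)"
    using bal_bounded by blast
  then have "0 \<le> real (Suc n) *\<^sub>R (1::'a)"
    by (metis add_le_cancel_left add_neg_numeral_special(7) of_nat_Suc mult_1_right
        scaleR_conv_of_real of_real_of_nat_eq)
  then show ?thesis
    by (simp add: zero_le_scaleR_iff)
qed

instance bal \<subseteq> ordered_semiring_1
  by standard (simp add: bal_zero_le_one order_le_neq_trans)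

lemma bal_bounded_scaleR: "\<exists>N \<ge> 1. - (N *\<^sub>R 1) \<le> x \<and> x \<le> N *\<^sub>R (1::'a::bal)"
proof -
  obtain n m :: nat where n: "x \<le> of_nat n * 1" and m: "- x \<le> of_nat m * 1"
    using bal_bounded by metis
  define N where "N = real n + real m + 1"
  have "x \<le> real n *\<^sub>R 1" "- x \<le> real m *\<^sub>R 1"
    using n m by (simp_all add: scaleR_conv_of_real)
  moreover have "real n *\<^sub>R (1::'a) \<le> N *\<^sub>R 1" "real m *\<^sub>R (1::'a) \<le> N *\<^sub>R 1"
    by (simp_all add: N_def scaleR_right_mono)
  ultimately show ?thesis
    by (intro exI[of _ N]) (auto simp: N_def minus_le_iff)
qed

lemma bal_le_epsilon:
  fixes x y u :: "'a::bal"
  assumes "0 \<le> u" and "\<And>\<epsilon>. 0 < \<epsilon> \<Longrightarrow> x \<le> y + \<epsilon> *\<^sub>R u"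
  shows "x \<le> y"
proof -
  have "of_nat n * (x - y) \<le> u" for n :: nat
  proof (cases "n = 0")
    case False
    then have "x - y \<le> (1 / real n) *\<^sub>R u"
      using assms(2)[of "1 / real n"] by (simp add: algebra_simps)
    then have "real n *\<^sub>R (x - y) \<le> real n *\<^sub>R ((1 / real n) *\<^sub>R u)"
      by (rule scaleR_left_mono) simp
    with False have "real n *\<^sub>R (x - y) \<le> u"
      by simp
    then show ?thesis
      by (simp add: scaleR_conv_of_real)
  qed (simp add: assms(1))
  then show ?thesis
    using bal_archimedean[of "x - y" u] by simp
qed

lemma inf_le_convex:
  fixes u v :: "'a::{ordered_real_vector, lattice}"
  assumes "0 \<le> t" "t \<le> 1"
  shows "inf u v \<le> t *\<^sub>R u + (1 - t) *\<^sub>R v"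
proof -
  have "inf u v = t *\<^sub>R inf u v + (1 - t) *\<^sub>R inf u v"
    by (simp add: algebra_simps)
  also have "\<dots> \<le> t *\<^sub>R u + (1 - t) *\<^sub>R v"
    using assms by (intro add_mono scaleR_left_mono) auto
  finally show ?thesis .
qed

lemma inf_scaleR_le:
  fixes a b :: "'a::{ordered_real_vector, lattice}"
  shows "0 < r \<Longrightarrow> inf (r *\<^sub>R a) (r *\<^sub>R b) \<le> r *\<^sub>R inf a b"
proof -
  assume r: "0 < r"
  have "inverse r *\<^sub>R inf (r *\<^sub>R a) (r *\<^sub>R b) \<le> inverse r *\<^sub>R (r *\<^sub>R a)"
    "inverse r *\<^sub>R inf (r *\<^sub>R a) (r *\<^sub>R b) \<le> inverse r *\<^sub>R (r *\<^sub>R b)"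
    using r by (intro scaleR_left_mono; simp)+
  then have "inverse r *\<^sub>R inf (r *\<^sub>R a) (r *\<^sub>R b) \<le> inf a b"
    using r by simp
  then have "r *\<^sub>R (inverse r *\<^sub>R inf (r *\<^sub>R a) (r *\<^sub>R b)) \<le> r *\<^sub>R inf a b"
    using r by (intro scaleR_left_mono) auto
  with r show ?thesis
    by simp
qed

lemma bal_inf_one_minus_scaleR_le: "inf (1 - real n *\<^sub>R d) d \<le> (1 / real (Suc n)) *\<^sub>R (1::'a::bal)"
proof -
  define t where "t = 1 / real (Suc n)"
  have t: "0 \<le> t" "t \<le> 1" "t * real n = 1 - t"
    by (auto simp: t_def field_simps)
  have "inf (1 - real n *\<^sub>R d) d \<le> t *\<^sub>R (1 - real n *\<^sub>R d) + (1 - t) *\<^sub>R d"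
    using t by (intro inf_le_convex) auto
  also have "\<dots> = t *\<^sub>R 1"
    using t(3) by (simp add: algebra_simps flip: scaleR_add_left)
  finally show ?thesis
    by (simp add: t_def)
qed

section \<open>Disjoint elements and idempotents\<close>

lemma bal_disjoint_mult_left:
  fixes a b c :: "'a::bal"
  assumes ab: "inf a b = 0" and c: "0 \<le> c"
  shows "inf (c * a) b = 0"
proof -
  have a: "0 \<le> a" and b: "0 \<le> b"
    using ab inf.cobounded1[of a b] inf.cobounded2[of a b] by simp_all
  obtain N where N: "N \<ge> 1" "c \<le> N *\<^sub>R 1"
    using bal_bounded_scaleR[of c] by blast
  have "c * a \<le> N *\<^sub>R a"
    using mult_right_mono[OF N(2) a] by simp
  moreover have "b \<le> N *\<^sub>R b"
    using scaleR_right_mono[of 1 N b] N b by simp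
  ultimately have "inf (c * a) b \<le> inf (N *\<^sub>R a) (N *\<^sub>R b)"
    by (rule inf_mono)
  also have "\<dots> \<le> N *\<^sub>R inf a b"
    using N by (intro inf_scaleR_le) auto
  finally show ?thesis
    using ab mult_nonneg_nonneg[OF c a] b by (simp add: order.antisym)
qed

lemma bal_disjoint_imp_mult_eq_0: "inf a b = 0 \<Longrightarrow> a * (b::'a::bal) = 0"
proof -
  assume ab: "inf a b = 0"
  have a: "0 \<le> a" and b: "0 \<le> b"
    using ab inf.cobounded1[of a b] inf.cobounded2[of a b] by simp_all
  have "inf (b * a) b = 0"
    using bal_disjoint_mult_left[OF ab b] .
  then have "inf (a * b) (b * a) = 0"
    using bal_disjoint_mult_left[of b "b * a" a] a by (simp add: inf.commute)
  then show ?thesis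
    by (simp add: mult.commute)
qed

lemma inf_pprt_minus_nprt: "inf (pprt x) (- nprt x) = (0::'a::lattice_ab_group_add)"
proof -
  have "- nprt x = pprt x + - x"
    using prts[of x] by (simp add: algebra_simps)
  then have "inf (pprt x) (- nprt x) = pprt x + inf 0 (- x)"
    using add_inf_distrib_left[of "pprt x" 0 "- x"] by simp
  also have "inf 0 (- x) = - pprt x"
    by (simp add: pprt_def sup.commute)
  finally show ?thesis
    by simp
qed

lemma bal_square_nonneg: "0 \<le> x * (x::'a::bal)"
proof -
  let ?p = "pprt x" and ?n = "- nprt x"
  have x: "x = ?p - ?n"
    using prts[of x] by simp
  have "?p * ?n = 0"
    by (rule bal_disjoint_imp_mult_eq_0[OF inf_pprt_minus_nprt])
  then have "x * x = ?p * ?p + ?n * ?n"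
    by (subst (1 2) x) (simp add: algebra_simps)
  then show ?thesis
    by (simp add: mult_nonpos_nonpos)
qed

lemma bal_idempotent_bounds: "q * q = q \<Longrightarrow> 0 \<le> q \<and> q \<le> (1::'a::bal)"
  using bal_square_nonneg[of q] bal_square_nonneg[of "1 - q"] by (simp add: algebra_simps)

lemma bal_idempotent_inf_eq_0:
  fixes a y :: "'a::bal"
  assumes a: "a * a = a" and y: "0 \<le> y" and ay: "a * y = 0"
  shows "inf a y = 0"
proof -
  have a0: "0 \<le> a" and a1: "0 \<le> 1 - a"
    using bal_idempotent_bounds[OF a] by auto
  have i: "0 \<le> inf a y"
    using a0 y by simp
  have "a * inf a y \<le> a * y" "(1 - a) * inf a y \<le> (1 - a) * a"
    using a0 a1 by (simp_all add: mult_left_mono)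
  then have "a * inf a y = 0" "(1 - a) * inf a y = 0"
    using ay a mult_nonneg_nonneg[OF a0 i] mult_nonneg_nonneg[OF a1 i]
    by (simp_all add: algebra_simps order.antisym)
  moreover have "inf a y = a * inf a y + (1 - a) * inf a y"
    by (simp add: algebra_simps)
  ultimately show ?thesis
    by simp
qed

lemma is_join_unique: "is_join S x \<Longrightarrow> is_join S y \<Longrightarrow> x = (y::'a::order)"
  unfolding is_join_def by (meson order.antisym)

lemma is_join_greatest: "x \<in> S \<Longrightarrow> (\<And>s. s \<in> S \<Longrightarrow> s \<le> x) \<Longrightarrow> is_join S x"
  unfolding is_join_def by blast

lemma is_meet_unique: "is_meet S x \<Longrightarrow> is_meet S y \<Longrightarrow> x = (y::'a::order)"
  unfolding is_meet_def by (meson order.antisym)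

lemma is_meet_iff_is_join_uminus:
  "is_meet S x \<longleftrightarrow> is_join (uminus ` S) (- x::'a::ordered_ab_group_add)"
proof -
  have "(\<forall>y. (\<forall>s\<in>S. y \<le> s) \<longrightarrow> y \<le> x) \<longleftrightarrow> (\<forall>y. (\<forall>s\<in>S. - s \<le> y) \<longrightarrow> - x \<le> y)"
    by (metis minus_le_iff minus_minus)
  then show ?thesis
    by (simp add: is_meet_def is_join_def)
qed

lemma is_join_inf_left:
  fixes a x :: "'a::lattice_ab_group_add"
  assumes x: "is_join S x"
  shows "is_join (inf a ` S) (inf a x)"
  unfolding is_join_def
proof safe
  show "inf a s \<le> inf a x" if "s \<in> S" for s
    using x that unfolding is_join_def by (meson inf_mono order_refl)
next
  fix u assume u: "\<forall>v\<in>inf a ` S. v \<le> u"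
  \<comment> \<open>\<open>inf a s = a + s - sup a s\<close> turns the bound on \<open>inf a s\<close> into a bound on \<open>s\<close>\<close>
  have inf_eq: "inf a v = a + v - sup a v" for v
    using add_eq_inf_sup[of a v] by (metis add_diff_cancel_left')
  have "s \<le> u - a + sup a x" if s: "s \<in> S" for s
  proof -
    have "s \<le> u - a + sup a s"
      using u s inf_eq[of s] by (metis add.commute add_diff_eq diff_le_eq image_eqI le_diff_eq)
    also have "sup a s \<le> sup a x"
      using x s unfolding is_join_def by (meson sup_mono order_refl)
    finally show ?thesis
      by simp
  qed
  then have "x \<le> u - a + sup a x"
    using x unfolding is_join_def by blast
  then show "inf a x \<le> u"
    using inf_eq[of x] by (metis add.commute add_diff_eq diff_le_eq le_diff_eq)
qed

instance lattice_ab_group_add \<subseteq> distrib_lattice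
proof
  fix x y z :: "'a::lattice_ab_group_add"
  have "is_join (inf x ` {y, z}) (inf x (sup y z))" for x y z :: 'a
    by (rule is_join_inf_left) (auto simp: is_join_def)
  then have "inf x (sup y z) = sup (inf x y) (inf x z)" for x y z :: 'a
    by (auto simp: is_join_def intro: order.antisym)
  then show "sup x (inf y z) = inf (sup x y) (sup x z)"
    by (rule distrib_imp1)
qed

lemma basic_is_meet_exists:
  fixes S :: "'a::basic set"
  assumes "S \<noteq> {}" and "\<forall>s\<in>S. l \<le> s"
  shows "\<exists>x. is_meet S x"
proof -
  have "\<forall>s\<in>uminus ` S. s \<le> - l"
    using assms(2) by auto
  then have "\<exists>y. is_join (uminus ` S) y"
    using assms(1) by (intro basic_dedekind_complete') blast+
  then show ?thesis
    by (metis is_meet_iff_is_join_uminus minus_minus)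
qed

lemma bal_not_is_join_empty: "\<not> is_join {} (x::'a::bal)"
proof
  assume "is_join {} x"
  then have "x \<le> x - 1"
    by (simp add: is_join_def)
  then show False
    by (metis diff_ge_0_iff_ge diff_right_commute diff_self leD zero_less_one)
qed

lemma bal_not_is_meet_empty: "\<not> is_meet {} (x::'a::bal)"
  using bal_not_is_join_empty[of "- x"] by (simp add: is_meet_iff_is_join_uminus)

context
  fixes h :: "'a::bal \<Rightarrow> 'b::bal"
  assumes h: "bal_hom h"
begin

lemma bal_hom_add: "h (a + b) = h a + h b"
  using h by (simp add: bal_hom_def)

lemma bal_hom_scaleR: "h (r *\<^sub>R a) = r *\<^sub>R h a"
  using h by (simp add: bal_hom_def)

lemma bal_hom_one: "h 1 = 1"
  using h by (simp add: bal_hom_def)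

lemma bal_hom_sup: "h (sup a b) = sup (h a) (h b)"
  using h by (simp add: bal_hom_def)

lemma bal_hom_inf: "h (inf a b) = inf (h a) (h b)"
  using h by (simp add: bal_hom_def)

lemma bal_hom_zero: "h 0 = 0"
  using bal_hom_scaleR[of 0 0] by simp

lemma bal_hom_minus: "h (- a) = - h a"
  using bal_hom_scaleR[of "-1" a] by simp

lemma bal_hom_diff: "h (a - b) = h a - h b"
  using bal_hom_add[of a "- b"] bal_hom_minus[of b] by simp

lemma bal_hom_scaleR_one: "h (r *\<^sub>R 1) = r *\<^sub>R 1"
  by (simp add: bal_hom_scaleR bal_hom_one)

lemma bal_hom_mono: "a \<le> b \<Longrightarrow> h a \<le> h b"
  by (metis bal_hom_sup le_iff_sup)

lemma bal_hom_le_iff: "inj h \<Longrightarrow> h a \<le> h b \<longleftrightarrow> a \<le> b"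
  by (metis bal_hom_sup bal_hom_mono injD le_iff_sup)

lemma bal_hom_Inf_fin: "finite X \<Longrightarrow> X \<noteq> {} \<Longrightarrow> h (Inf_fin X) = Inf_fin (h ` X)"
  by (induction X rule: finite_ne_induct) (simp_all add: bal_hom_inf)

lemma bal_hom_is_meet_Inf_fin: "finite X \<Longrightarrow> X \<noteq> {} \<Longrightarrow> is_meet (h ` X) (h (Inf_fin X))"
  unfolding is_meet_def by (auto simp: bal_hom_Inf_fin intro: Inf_fin.coboundedI Inf_fin.boundedI)

end

lemma bal_hom_comp: "bal_hom f \<Longrightarrow> bal_hom g \<Longrightarrow> bal_hom (g \<circ> f)"
  by (simp add: bal_hom_def)

section \<open>The reals as a basic algebra\<close>

instance real :: bal
proof
  show "\<exists>n::nat. a \<le> of_nat n * 1" for a :: real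
    by (simp add: real_arch_simple)
  show "a \<le> 0" if "\<And>n::nat. of_nat n * a \<le> b" for a b :: real
  proof (rule ccontr)
    assume "\<not> a \<le> 0"
    moreover obtain n :: nat where "b / a < n"
      using reals_Archimedean2 by blast
    ultimately show False
      using that[of n] by (simp add: field_simps)
  qed
qed (simp_all add: sup_max)

instance real :: basic
proof
  show "\<exists>x. (\<forall>s\<in>S. s \<le> x) \<and> (\<forall>y. (\<forall>s\<in>S. s \<le> y) \<longrightarrow> x \<le> y)"
    if "S \<noteq> {}" "\<exists>u. \<forall>s\<in>S. s \<le> u" for S :: "real set"
    using that by (intro exI[of _ "Sup S"]) (auto intro!: cSup_upper cSup_least simp: bdd_above_def)
  show "\<exists>a. (a * a = a \<and> a \<noteq> 0 \<and> (\<forall>f. f * f = f \<and> f * a = f \<longrightarrow> f = 0 \<or> f = a)) \<and> a * e = a"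
    if "e * e = e" "e \<noteq> 0" for e :: real
    using that by (intro exI[of _ 1]) auto
qed

lemma bal_hom_real_eqI:
  fixes \<chi> \<psi> :: "'a::bal \<Rightarrow> real"
  assumes "bal_hom \<chi>" "bal_hom \<psi>" and "\<And>a. \<chi> a = 0 \<Longrightarrow> \<psi> a = 0"
  shows "\<psi> = \<chi>"
proof
  fix a
  have "\<chi> (a - \<chi> a *\<^sub>R 1) = 0"
    using assms(1) by (simp add: bal_hom_diff bal_hom_scaleR_one)
  then have "\<psi> (a - \<chi> a *\<^sub>R 1) = 0"
    by (rule assms(3))
  then show "\<psi> a = \<chi> a"
    using assms(2) by (simp add: bal_hom_diff bal_hom_scaleR_one)
qed

lemma bal_hom_real_eq_if_bounded_below:
  fixes \<chi> \<psi> :: "'a::bal \<Rightarrow> real"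
  assumes \<chi>: "bal_hom \<chi>" and \<psi>: "bal_hom \<psi>" and "0 < \<delta>"
    and bounded: "\<And>b. 0 \<le> b \<Longrightarrow> b \<le> 1 \<Longrightarrow> \<chi> b = 1 \<Longrightarrow> \<delta> \<le> \<psi> b"
  shows "\<psi> = \<chi>"
proof (rule bal_hom_real_eqI[OF \<chi> \<psi>])
  fix a assume "\<chi> a = 0"
  show "\<psi> a = 0"
  proof (rule ccontr)
    define v where "v = max (\<psi> a) (- \<psi> a)"
    assume "\<psi> a \<noteq> 0"
    then have "0 < v"
      by (auto simp: v_def max_def)
    then obtain n :: nat where n: "1 / v < real n"
      using reals_Archimedean2 by blast
    \<comment> \<open>\<open>1 - n |a|\<close> truncated to \<open>[0, 1]\<close>: \<open>\<chi>\<close> sends it to \<open>1\<close>, but \<open>\<psi>\<close> to \<open>0\<close>\<close>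
    define b where "b = inf (sup (1 - real n *\<^sub>R sup a (- a)) 0) (1::'a)"
    have "\<chi> b = 1" "\<psi> b = min (max (1 - real n * v) 0) 1"
      using \<chi> \<psi> \<open>\<chi> a = 0\<close> by (simp_all add: b_def v_def bal_hom_inf bal_hom_sup bal_hom_diff
          bal_hom_scaleR bal_hom_one bal_hom_minus bal_hom_zero sup_max inf_min)
    then have "\<delta> \<le> min (max (1 - real n * v) 0) 1"
      using bounded[of b] by (simp add: b_def)
    moreover have "1 < real n * v"
      using n \<open>0 < v\<close> by (simp add: field_simps)
    ultimately show False
      using \<open>0 < \<delta>\<close> by simp
  qed
qed

section \<open>The support idempotent of an element\<close>

text \<open>\<open>support d\<close> is the component of \<open>1\<close> in the band generated by \<open>d\<close>; in \<open>B(Y)\<close> it is the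
  indicator function of the set where \<open>d\<close> does not vanish.\<close>

definition support :: "'a::basic \<Rightarrow> 'a" where
  "support d = (THE f. is_join (range (\<lambda>n::nat. inf (real n *\<^sub>R d) 1)) f)"

lemma support_is_join: "is_join (range (\<lambda>n::nat. inf (real n *\<^sub>R d) 1)) (support d)"
proof -
  have "\<exists>f. is_join (range (\<lambda>n::nat. inf (real n *\<^sub>R d) 1)) f"
    by (rule basic_dedekind_complete') (auto intro: inf_le2)
  then show ?thesis
    unfolding support_def by (metis is_join_unique theI')
qed

lemma inf_le_support: "inf (real n *\<^sub>R d) 1 \<le> support d"
  using support_is_join[of d] unfolding is_join_def by blast

lemma support_le_one: "support d \<le> 1"
  using support_is_join[of d] unfolding is_join_def by auto

lemma support_nonneg: "0 \<le> support d"
  using inf_le_support[of 0 d] by (simp add: inf_absorb1)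

lemma inf_one_minus_support:
  fixes d :: "'a::basic"
  assumes d: "0 \<le> d"
  shows "inf (1 - support d) d = 0"
proof (rule order.antisym)
  show "inf (1 - support d) d \<le> 0"
  proof (rule bal_le_epsilon[OF zero_le_one])
    fix \<epsilon> :: real assume "0 < \<epsilon>"
    obtain n :: nat where n: "1 / \<epsilon> < real n"
      using reals_Archimedean2 by blast
    define t where "t = 1 / real (Suc n)"
    have t: "0 < t" "t \<le> \<epsilon>"
      using \<open>0 < \<epsilon>\<close> n by (auto simp: t_def field_simps)
    have "1 - support d \<le> sup (1 - real n *\<^sub>R d) 0"
      using diff_left_mono[OF inf_le_support[of n d], of 1]
      by (simp add: add_sup_distrib_left)
    then have "inf (1 - support d) d \<le> inf (sup (1 - real n *\<^sub>R d) 0) d"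
      by (rule inf_mono) simp
    also have "\<dots> = sup (inf (1 - real n *\<^sub>R d) d) 0"
      using d by (simp add: inf_sup_distrib2 inf_absorb1)
    also have "\<dots> \<le> sup (t *\<^sub>R 1) 0"
      using bal_inf_one_minus_scaleR_le[of n d] unfolding t_def by (rule sup_mono) simp
    also have "\<dots> \<le> \<epsilon> *\<^sub>R 1"
      using t \<open>0 < \<epsilon>\<close> by (simp add: scaleR_right_mono scaleR_nonneg_nonneg)
    finally show "inf (1 - support d) d \<le> 0 + \<epsilon> *\<^sub>R 1"
      by simp
  qed
  show "0 \<le> inf (1 - support d) d"
    using d support_le_one by simp
qed

lemma inf_support_eq_0:
  fixes y d :: "'a::basic"
  assumes y: "0 \<le> y" and yd: "inf y d = 0"
  shows "inf y (support d) = 0"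
proof (rule order.antisym)
  have "inf y (inf (real n *\<^sub>R d) 1) \<le> 0" for n
  proof -
    have "inf y (real n *\<^sub>R d) = 0"
      using bal_disjoint_mult_left[of d y "real n *\<^sub>R 1"] yd
      by (simp add: inf.commute scaleR_nonneg_nonneg)
    then show ?thesis
      by (metis inf.cobounded1 inf_mono order_refl)
  qed
  then show "inf y (support d) \<le> 0"
    using is_join_inf_left[OF support_is_join, of y] unfolding is_join_def by blast
  show "0 \<le> inf y (support d)"
    using y support_nonneg by simp
qed

lemma mult_support_eq_0: "0 \<le> y \<Longrightarrow> inf y d = 0 \<Longrightarrow> y * support d = (0::'a::basic)"
  by (rule bal_disjoint_imp_mult_eq_0) (rule inf_support_eq_0)

lemma support_idempotent_and_mult:
  fixes d :: "'a::basic"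
  assumes d: "0 \<le> d"
  shows "support d * support d = support d" and "d * support d = d"
proof -
  have "(1 - support d) * support d = 0"
    using mult_support_eq_0[OF _ inf_one_minus_support[OF d]] by (simp add: support_le_one)
  then show "support d * support d = support d"
    by (simp add: algebra_simps)
  have "d * (1 - support d) = 0"
    using bal_disjoint_imp_mult_eq_0[of d "1 - support d"] inf_one_minus_support[OF d]
    by (simp add: inf.commute)
  then show "d * support d = d"
    by (simp add: algebra_simps)
qed

section \<open>Atoms\<close>

lemma idem_atom_iff:
  "idem_atom q \<longleftrightarrow> q * q = q \<and> q \<noteq> 0 \<and> (\<forall>f. f * f = f \<and> f * q = f \<longrightarrow> f = 0 \<or> f = q)"
  by (auto simp: idem_atom_def idempotents_def)

lemma idem_atom_nonneg: "idem_atom q \<Longrightarrow> 0 \<le> (q::'a::bal)"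
  using bal_idempotent_bounds by (auto simp: idem_atom_iff)

lemma idem_atom_below:
  fixes d :: "'a::basic"
  assumes d: "0 \<le> d" "d \<noteq> 0"
  shows "\<exists>q. idem_atom q \<and> q * d \<noteq> 0"
proof -
  have "support d \<noteq> 0"
    using support_idempotent_and_mult(2)[OF d(1)] d(2) by auto
  then obtain q where q: "idem_atom q" and qf: "q * support d = q"
    using basic_idem_atomic[OF support_idempotent_and_mult(1)[OF d(1)]]
    unfolding idem_atom_iff by blast
  have "q * d \<noteq> 0"
  proof
    assume "q * d = 0"
    then have "inf q d = 0"
      using q d(1) by (intro bal_idempotent_inf_eq_0) (simp_all add: idem_atom_iff)
    then have "q * support d = 0"
      using q by (intro mult_support_eq_0) (simp_all add: idem_atom_nonneg)
    then show False
      using q qf by (simp add: idem_atom_iff)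
  qed
  with q show ?thesis
    by blast
qed

lemma idem_atom_exists: "\<exists>q::'a::basic. idem_atom q"
  using idem_atom_below[of 1] by auto

lemma idem_atom_mult_idempotent:
  fixes q f :: "'a::comm_ring_1"
  assumes q: "idem_atom q" and f: "f * f = f"
  shows "q * f = 0 \<or> q * f = q"
proof -
  have qq: "q * q = q"
    using q by (simp add: idem_atom_iff)
  have "(q * f) * (q * f) = (q * q) * (f * f)" "(q * f) * q = (q * q) * f"
    by (simp_all add: mult_ac)
  then have "(q * f) * (q * f) = q * f" "(q * f) * q = q * f"
    by (simp_all add: qq f)
  with q show ?thesis
    unfolding idem_atom_iff by blast
qed

lemma idem_atom_mult_distinct:
  fixes q q' :: "'a::comm_ring_1"
  assumes q: "idem_atom q" and q': "idem_atom q'" and "q \<noteq> q'"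
  shows "q * q' = 0"
proof -
  have "q * q = q" "q' * q' = q'"
    using q q' by (simp_all add: idem_atom_iff)
  then have "q * q' = 0 \<or> q * q' = q" "q' * q = 0 \<or> q' * q = q'"
    using idem_atom_mult_idempotent q q' by blast+
  with assms show ?thesis
    by (auto simp: mult.commute idem_atom_iff)
qed

lemma idem_atom_mult_sign:
  fixes y :: "'a::basic"
  assumes q: "idem_atom q"
  shows "0 \<le> q * y \<or> q * y \<le> 0"
proof -
  let ?p = "pprt y" and ?n = "- nprt y" and ?f = "support (pprt y)"
  have qy: "q * y = q * ?p - q * ?n"
    using prts[of y] by (metis right_diff_distrib diff_minus_eq_add)
  have q0: "0 \<le> q" and p0: "0 \<le> ?p" and n0: "0 \<le> ?n"
    using idem_atom_nonneg[OF q] by simp_all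
  consider "q * ?f = 0" | "q * ?f = q"
    using idem_atom_mult_idempotent[OF q support_idempotent_and_mult(1)[OF p0]] by blast
  then show ?thesis
  proof cases
    case 1
    then have "q * ?p = 0"
      using support_idempotent_and_mult(2)[OF p0] by (metis mult.left_commute mult_zero_right)
    with qy show ?thesis
      using mult_nonneg_nonneg[OF q0 n0] by simp
  next
    case 2
    have "?n * ?f = 0"
      using n0 inf_pprt_minus_nprt[of y] by (intro mult_support_eq_0) (simp_all add: inf.commute)
    then have "q * ?n = 0"
      using 2 by (metis mult.left_commute mult.commute mult_zero_right)
    with qy show ?thesis
      using mult_nonneg_nonneg[OF q0 p0] by simp
  qed
qed

lemma idem_atom_scaleR_le_iff:
  fixes q :: "'a::bal"
  assumes q: "idem_atom q"
  shows "r *\<^sub>R q \<le> s *\<^sub>R q \<longleftrightarrow> r \<le> s"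
proof
  have q0: "0 \<le> q" and qn0: "q \<noteq> 0"
    using q by (simp_all add: idem_atom_nonneg idem_atom_iff)
  show "r \<le> s \<Longrightarrow> r *\<^sub>R q \<le> s *\<^sub>R q"
    using q0 by (simp add: scaleR_right_mono)
  show "r \<le> s" if le: "r *\<^sub>R q \<le> s *\<^sub>R q"
  proof (rule ccontr)
    assume "\<not> r \<le> s"
    then have "s *\<^sub>R q \<le> r *\<^sub>R q"
      using q0 by (simp add: scaleR_right_mono)
    with le have "r *\<^sub>R q = s *\<^sub>R q"
      by (rule order.antisym)
    with qn0 \<open>\<not> r \<le> s\<close> show False
      by simp
  qed
qed

lemma idem_atom_scaleR_le_or_ge:
  fixes c :: "'a::basic"
  assumes q: "idem_atom q"
  shows "s *\<^sub>R q \<le> q * c \<or> q * c \<le> s *\<^sub>R q"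
proof -
  have "q * (c - s *\<^sub>R 1) = q * c - s *\<^sub>R q"
    by (simp add: right_diff_distrib)
  then show ?thesis
    using idem_atom_mult_sign[OF q, of "c - s *\<^sub>R 1"] by simp
qed

lemma idem_atom_mult_scalar:
  fixes c :: "'a::basic"
  assumes q: "idem_atom q"
  shows "\<exists>r. q * c = r *\<^sub>R q"
proof -
  have q0: "0 \<le> q"
    using q by (simp add: idem_atom_nonneg)
  obtain N where N: "- (N *\<^sub>R 1) \<le> c" "c \<le> N *\<^sub>R 1"
    using bal_bounded_scaleR[of c] by blast
  define K where "K = {s. s *\<^sub>R q \<le> q * c}"
  have "- N \<in> K"
    using mult_left_mono[OF N(1) q0] by (simp add: K_def)
  have bdd: "bdd_above K"
  proof (rule bdd_aboveI)
    show "s \<le> N" if "s \<in> K" for s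
      using that mult_left_mono[OF N(2) q0]
      by (simp add: K_def idem_atom_scaleR_le_iff[OF q, symmetric])
  qed
  define r where "r = Sup K"
  have "r *\<^sub>R q \<le> q * c"
  proof (rule bal_le_epsilon[OF q0])
    fix \<epsilon> :: real assume "0 < \<epsilon>"
    then have "r - \<epsilon> < Sup K"
      by (simp add: r_def)
    then obtain s where s: "s \<in> K" "r - \<epsilon> < s"
      using less_cSup_iff[of K] \<open>- N \<in> K\<close> bdd by blast
    have "r *\<^sub>R q \<le> (s + \<epsilon>) *\<^sub>R q"
      using s(2) q0 by (intro scaleR_right_mono) simp_all
    also have "\<dots> \<le> q * c + \<epsilon> *\<^sub>R q"
      using s(1) by (simp add: K_def scaleR_add_left)
    finally show "r *\<^sub>R q \<le> q * c + \<epsilon> *\<^sub>R q" .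
  qed
  moreover have "q * c \<le> r *\<^sub>R q"
  proof (rule bal_le_epsilon[OF q0])
    fix \<epsilon> :: real assume "0 < \<epsilon>"
    then have "r + \<epsilon> \<notin> K"
      using cSup_upper[OF _ bdd, of "r + \<epsilon>"] by (auto simp: r_def)
    then have "q * c \<le> (r + \<epsilon>) *\<^sub>R q"
      using idem_atom_scaleR_le_or_ge[OF q, of "r + \<epsilon>" c] by (auto simp: K_def)
    then show "q * c \<le> r *\<^sub>R q + \<epsilon> *\<^sub>R q"
      by (simp add: scaleR_add_left)
  qed
  ultimately show ?thesis
    by (blast intro: order.antisym)
qed

section \<open>Evaluation at an atom\<close>

definition atom_val :: "'a::basic \<Rightarrow> 'a \<Rightarrow> real" where
  "atom_val q c = (THE r. q * c = r *\<^sub>R q)"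

lemma atom_val_unique:
  assumes q: "idem_atom q" and c: "q * c = r *\<^sub>R q"
  shows "atom_val q c = r"
proof -
  have "q \<noteq> 0"
    using q by (simp add: idem_atom_iff)
  with c show ?thesis
    unfolding atom_val_def by (intro the_equality) auto
qed

lemma idem_atom_mult: "idem_atom q \<Longrightarrow> q * c = atom_val q c *\<^sub>R q"
  using idem_atom_mult_scalar atom_val_unique by metis

context
  fixes q :: "'a::basic"
  assumes q: "idem_atom q"
begin

lemma atom_val_add: "atom_val q (a + b) = atom_val q a + atom_val q b"
  by (rule atom_val_unique[OF q]) (simp add: distrib_left idem_atom_mult[OF q] scaleR_add_left)

lemma atom_val_scaleR: "atom_val q (r *\<^sub>R a) = r * atom_val q a"
  by (rule atom_val_unique[OF q]) (simp add: idem_atom_mult[OF q, of a])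

lemma atom_val_one: "atom_val q 1 = 1"
  by (rule atom_val_unique[OF q]) simp

lemma atom_val_mult: "atom_val q (a * b) = atom_val q a * atom_val q b"
proof (rule atom_val_unique[OF q])
  have "q * (a * b) = (q * q) * (a * b)"
    using q by (simp add: idem_atom_iff)
  also have "\<dots> = (q * a) * (q * b)"
    by (simp add: mult_ac)
  finally have "q * (a * b) = (q * a) * (q * b)" .
  then show "q * (a * b) = (atom_val q a * atom_val q b) *\<^sub>R q"
    using q by (simp add: idem_atom_mult[OF q, of a] idem_atom_mult[OF q, of b] idem_atom_iff)
qed

lemma atom_val_minus: "atom_val q (- a) = - atom_val q a"
  using atom_val_scaleR[of "- 1" a] by simp

lemma atom_val_diff: "atom_val q (a - b) = atom_val q a - atom_val q b"
  using atom_val_add[of a "- b"] by (simp add: atom_val_minus)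

lemma atom_val_nonneg: "0 \<le> a \<Longrightarrow> 0 \<le> atom_val q a"
proof -
  assume "0 \<le> a"
  then have "0 *\<^sub>R q \<le> atom_val q a *\<^sub>R q"
    using mult_nonneg_nonneg[OF idem_atom_nonneg[OF q]] idem_atom_mult[OF q] by simp
  then show ?thesis
    by (simp only: idem_atom_scaleR_le_iff[OF q])
qed

lemma atom_val_pprt: "atom_val q (pprt a) = max (atom_val q a) 0"
proof -
  have "pprt a * - nprt a = 0"
    by (rule bal_disjoint_imp_mult_eq_0[OF inf_pprt_minus_nprt])
  then have "atom_val q (pprt a) * atom_val q (- nprt a) = 0"
    using atom_val_mult[of "pprt a" "- nprt a"] atom_val_scaleR[of 0 0] by simp
  moreover have "atom_val q a = atom_val q (pprt a) + atom_val q (nprt a)"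
    using arg_cong[OF prts[of a], of "atom_val q"] by (simp only: atom_val_add)
  then have "atom_val q (pprt a) - atom_val q (- nprt a) = atom_val q a"
    by (simp add: atom_val_minus)
  moreover have "0 \<le> atom_val q (pprt a)" "0 \<le> atom_val q (- nprt a)"
    by (simp_all add: atom_val_nonneg)
  ultimately show ?thesis
    by (auto simp: max_def)
qed

lemma atom_val_sup: "atom_val q (sup a b) = sup (atom_val q a) (atom_val q b)"
proof -
  have "sup a b = a + pprt (b - a)"
    by (simp add: pprt_def add_sup_distrib_left sup.commute)
  then show ?thesis
    by (auto simp: atom_val_add atom_val_diff atom_val_pprt sup_max max_def)
qed

lemma atom_val_inf: "atom_val q (inf a b) = inf (atom_val q a) (atom_val q b)"
proof -
  have "atom_val q (inf a b) = - atom_val q (sup (- a) (- b))"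
    by (simp only: inf_eq_neg_sup[of a b] atom_val_minus)
  then show ?thesis
    by (simp add: atom_val_sup atom_val_minus sup_max inf_min max_def min_def)
qed

lemma bal_hom_atom_val: "bal_hom (atom_val q)"
  by (simp add: bal_hom_def atom_val_add atom_val_mult atom_val_scaleR atom_val_one
      atom_val_sup atom_val_inf)

end

lemma atom_val_self: "idem_atom q \<Longrightarrow> atom_val q q = 1"
  by (rule atom_val_unique) (simp_all add: idem_atom_iff)

lemma atom_val_atom:
  assumes "idem_atom q" "idem_atom q'"
  shows "atom_val q q' = (if q = q' then 1 else 0)"
  using assms idem_atom_mult_distinct[of q q'] by (auto simp: atom_val_self intro!: atom_val_unique)

lemmas atom_val_mono = bal_hom_mono[OF bal_hom_atom_val]

lemma atom_val_le_imp_le: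
  fixes a b :: "'a::basic"
  assumes "\<And>q. idem_atom q \<Longrightarrow> atom_val q a \<le> atom_val q b"
  shows "a \<le> b"
proof -
  have "q * pprt (a - b) = 0" if q: "idem_atom q" for q
    using assms[OF q] idem_atom_mult[OF q, of "pprt (a - b)"]
    by (simp add: atom_val_pprt[OF q] atom_val_diff[OF q])
  then have "pprt (a - b) = 0"
    using idem_atom_below[of "pprt (a - b)"] by auto
  then show ?thesis
    by (simp add: le_zero_iff_zero_pprt[symmetric])
qed

lemma atom_val_ext: "(\<And>q. idem_atom q \<Longrightarrow> atom_val q a = atom_val q (b::'a::basic)) \<Longrightarrow> a = b"
  by (rule order.antisym; rule atom_val_le_imp_le) simp_all

lemma is_join_atom_val:
  fixes x :: "'a::basic"
  assumes j: "is_join S x" and q: "idem_atom q"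
  shows "is_join (atom_val q ` S) (atom_val q x)"
  unfolding is_join_def
proof safe
  show "atom_val q s \<le> atom_val q x" if "s \<in> S" for s
    using j that q by (simp add: is_join_def atom_val_mono)
  fix t assume t: "\<forall>v\<in>atom_val q ` S. v \<le> t"
  \<comment> \<open>lowering \<open>x\<close> at the single atom \<open>q\<close> to \<open>t\<close> keeps an upper bound of \<open>S\<close>\<close>
  define y where "y = x + (t - atom_val q x) *\<^sub>R q"
  have y: "atom_val q' y = (if q' = q then t else atom_val q' x)" if "idem_atom q'" for q'
    using q that by (simp add: y_def atom_val_add atom_val_scaleR atom_val_atom)
  have "s \<le> y" if s: "s \<in> S" for s
  proof (rule atom_val_le_imp_le)
    fix q' :: 'a assume q': "idem_atom q'"
    have "atom_val q' s \<le> atom_val q' x"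
      using j s q' by (simp add: is_join_def atom_val_mono)
    moreover have "atom_val q s \<le> t"
      using t s by blast
    ultimately show "atom_val q' s \<le> atom_val q' y"
      using y[OF q'] by auto
  qed
  then have "x \<le> y"
    using j unfolding is_join_def by blast
  then show "atom_val q x \<le> t"
    using atom_val_mono[OF q] y[OF q] by fastforce
qed

lemma is_join_iff_atom_val:
  fixes x :: "'a::basic"
  shows "is_join S x \<longleftrightarrow> (\<forall>q. idem_atom q \<longrightarrow> is_join (atom_val q ` S) (atom_val q x))"
proof (intro iffI allI impI)
  show "is_join (atom_val q ` S) (atom_val q x)" if "is_join S x" "idem_atom q" for q
    using that by (rule is_join_atom_val)
  assume H: "\<forall>q. idem_atom q \<longrightarrow> is_join (atom_val q ` S) (atom_val q x)"
  show "is_join S x"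
    unfolding is_join_def
  proof safe
    show "s \<le> x" if "s \<in> S" for s
      using H that by (rule_tac atom_val_le_imp_le) (auto simp: is_join_def)
    fix y assume y: "\<forall>s\<in>S. s \<le> y"
    show "x \<le> y"
    proof (rule atom_val_le_imp_le)
      fix q :: 'a assume q: "idem_atom q"
      have "\<forall>v\<in>atom_val q ` S. v \<le> atom_val q y"
        using y atom_val_mono[OF q] by blast
      then show "atom_val q x \<le> atom_val q y"
        using H q unfolding is_join_def by blast
    qed
  qed
qed

lemma is_meet_iff_atom_val:
  fixes x :: "'a::basic"
  shows "is_meet S x \<longleftrightarrow> (\<forall>q. idem_atom q \<longrightarrow> is_meet (atom_val q ` S) (atom_val q x))"
proof -
  have "is_meet (atom_val q ` S) (atom_val q x) \<longleftrightarrow>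
      is_join (atom_val q ` uminus ` S) (atom_val q (- x))" if "idem_atom q" for q
    using that
    by (simp add: is_meet_iff_is_join_uminus[of "atom_val q ` S"] image_image atom_val_minus)
  then show ?thesis
    using is_meet_iff_is_join_uminus[of S x] is_join_iff_atom_val[of "uminus ` S" "- x"] by simp
qed

lemma atom_val_bounded: "\<exists>N. \<forall>q. idem_atom q \<longrightarrow> \<bar>atom_val q (x::'a::basic)\<bar> \<le> N"
proof -
  obtain N where N: "- (N *\<^sub>R 1) \<le> x" "x \<le> N *\<^sub>R 1"
    using bal_bounded_scaleR[of x] by blast
  have "\<bar>atom_val q x\<bar> \<le> N" if q: "idem_atom q" for q
    using atom_val_mono[OF q N(1)] atom_val_mono[OF q N(2)] q
    by (simp add: abs_le_iff atom_val_minus atom_val_scaleR atom_val_one)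
  then show ?thesis
    by blast
qed

lemma exists_atom_val_eq:
  fixes r :: "'a::basic \<Rightarrow> real"
  assumes r: "\<And>q. idem_atom q \<Longrightarrow> \<bar>r q\<bar> \<le> N"
  shows "\<exists>c::'a. \<forall>q. idem_atom q \<longrightarrow> atom_val q c = r q"
proof -
  obtain q0 :: 'a where "idem_atom q0"
    using idem_atom_exists by blast
  then have N0: "0 \<le> N"
    using r by force
  \<comment> \<open>\<open>u q'\<close> has value \<open>r q'\<close> at \<open>q'\<close> and the common lower bound \<open>- N\<close> at all other atoms\<close>
  define u where "u q' = (r q' + N) *\<^sub>R q' - N *\<^sub>R 1" for q' :: 'a
  have u: "atom_val q (u q') = (if q = q' then r q' else - N)"
    if "idem_atom q" "idem_atom q'" for q q'
    using that by (simp add: u_def atom_val_diff atom_val_scaleR atom_val_one atom_val_atom)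
  have "u q' \<le> N *\<^sub>R 1" if q': "idem_atom q'" for q'
  proof (rule atom_val_le_imp_le)
    fix q :: 'a assume q: "idem_atom q"
    show "atom_val q (u q') \<le> atom_val q (N *\<^sub>R 1)"
      using u[OF q q'] r[OF q'] N0 q by (simp add: atom_val_scaleR atom_val_one abs_le_iff)
  qed
  then obtain c where c: "is_join (u ` {q. idem_atom q}) c"
    using basic_dedekind_complete'[of "u ` {q. idem_atom q}"] \<open>idem_atom q0\<close> by blast
  have "atom_val q c = r q" if q: "idem_atom q" for q
  proof -
    have "r q \<in> atom_val q ` u ` {q. idem_atom q}"
      using u[OF q q] q by (metis image_eqI mem_Collect_eq)
    moreover have "v \<le> r q" if "v \<in> atom_val q ` u ` {q. idem_atom q}" for v
      using that u[OF q] r[OF q] by (auto simp: abs_le_iff)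
    ultimately have "is_join (atom_val q ` u ` {q. idem_atom q}) (r q)"
      by (rule is_join_greatest)
    then show ?thesis
      using c q is_join_unique is_join_iff_atom_val[of "u ` {q. idem_atom q}" c] by blast
  qed
  then show ?thesis
    by blast
qed

lemma normal_hom_atom_valI:
  fixes \<gamma> :: "'b::basic \<Rightarrow> 'c::basic" and P :: "'c \<Rightarrow> 'b"
  assumes P: "\<And>q. idem_atom q \<Longrightarrow> idem_atom (P q)"
    and \<gamma>: "\<And>q x. idem_atom q \<Longrightarrow> atom_val q (\<gamma> x) = atom_val (P q) x"
  shows "normal_hom \<gamma>"
proof -
  have "bal_hom \<gamma>"
    unfolding bal_hom_def
    by (intro conjI allI; rule atom_val_ext)
      (simp_all add: \<gamma> P atom_val_add atom_val_mult atom_val_scaleR atom_val_one atom_val_sup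
        atom_val_inf)
  moreover have img: "atom_val q ` \<gamma> ` S = atom_val (P q) ` S" if "idem_atom q" for q S
    using \<gamma>[OF that] by (simp add: image_image)
  \<comment> \<open>\<open>is_join_iff_atom_val\<close> is used only instantiated: as \<open>real\<close> is a basic algebra
    itself, rewriting with the general equation does not terminate\<close>
  have "is_join (\<gamma> ` S) (\<gamma> x)" if "is_join S x" for S x
  proof -
    have "is_join (atom_val (P q) ` S) (atom_val (P q) x)" if "idem_atom q" for q
      using \<open>is_join S x\<close> P[OF that] by (rule is_join_atom_val)
    then show ?thesis
      using img \<gamma> by (simp add: is_join_iff_atom_val[of "\<gamma> ` S"])
  qed
  moreover have "is_meet (\<gamma> ` S) (\<gamma> x)" if "is_meet S x" for S x
  proof -
    have "is_meet (atom_val (P q) ` S) (atom_val (P q) x)" if "idem_atom q" for q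
      using \<open>is_meet S x\<close> P[OF that] is_meet_iff_atom_val[of S x] by blast
    then show ?thesis
      using img \<gamma> by (simp add: is_meet_iff_atom_val[of "\<gamma> ` S"])
  qed
  ultimately show ?thesis
    unfolding normal_hom_def by blast
qed

lemma exists_normal_hom_atom_val:
  fixes P :: "'c::basic \<Rightarrow> 'b::basic"
  assumes P: "\<And>q. idem_atom q \<Longrightarrow> idem_atom (P q)"
  obtains \<gamma> :: "'b \<Rightarrow> 'c"
  where "normal_hom \<gamma>" and "\<And>q x. idem_atom q \<Longrightarrow> atom_val q (\<gamma> x) = atom_val (P q) x"
proof -
  have "\<forall>x::'b. \<exists>c::'c. \<forall>q. idem_atom q \<longrightarrow> atom_val q c = atom_val (P q) x"
  proof
    fix x :: 'b
    obtain N where "\<forall>p. idem_atom p \<longrightarrow> \<bar>atom_val p x\<bar> \<le> N"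
      using atom_val_bounded by blast
    then show "\<exists>c. \<forall>q. idem_atom q \<longrightarrow> atom_val q c = atom_val (P q) x"
      using P by (intro exists_atom_val_eq) blast
  qed
  from choice[OF this] obtain \<gamma> :: "'b \<Rightarrow> 'c"
    where "\<forall>x q. idem_atom q \<longrightarrow> atom_val q (\<gamma> x) = atom_val (P q) x"
    by blast
  then have \<gamma>: "\<And>q x. idem_atom q \<Longrightarrow> atom_val q (\<gamma> x) = atom_val (P q) x"
    by blast
  with P have "normal_hom \<gamma>"
    by (rule normal_hom_atom_valI)
  then show ?thesis
    using \<gamma> by (rule that)
qed

section \<open>Canonical extensions\<close>

lemma canonical_extension_density:
  fixes e :: "'a::bal \<Rightarrow> 'b::basic"
  shows "canonical_extension e \<Longrightarrow>
    \<exists>\<S>. (\<forall>S\<in>\<S>. \<exists>m. is_meet (e ` S) m) \<and> is_join {m. \<exists>S\<in>\<S>. is_meet (e ` S) m} x"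
  unfolding canonical_extension_def by blast

lemma canonical_extension_compactness:
  fixes e :: "'a::bal \<Rightarrow> 'b::basic"
  assumes "canonical_extension e" and "0 < \<epsilon>" and "is_meet (e ` S) m" "is_join (e ` T) j"
    and "m + of_real \<epsilon> \<le> j"
  obtains S' T' m' j' where "finite S'" "S' \<subseteq> S" "finite T'" "T' \<subseteq> T"
    and "is_meet (e ` S') m'" "is_join (e ` T') j'" "m' \<le> j'"
proof -
  from assms(1) have "\<forall>S T (\<epsilon>::real) m j.
      \<epsilon> > 0 \<longrightarrow> is_meet (e ` S) m \<longrightarrow> is_join (e ` T) j \<longrightarrow> m + of_real \<epsilon> \<le> j \<longrightarrow>
      (\<exists>S' T' m' j'. finite S' \<and> S' \<subseteq> S \<and> finite T' \<and> T' \<subseteq> T \<and>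
         is_meet (e ` S') m' \<and> is_join (e ` T') j' \<and> m' \<le> j')"
    unfolding canonical_extension_def by (elim conjE)
  from this[rule_format, OF assms(2-5)] show ?thesis
    by (elim exE conjE) (rule that)
qed

lemma canonical_extension_normal_hom_unique:
  fixes e :: "'a::bal \<Rightarrow> 'b::basic" and \<gamma> \<gamma>' :: "'b \<Rightarrow> 'c::basic"
  assumes e: "canonical_extension e" and "normal_hom \<gamma>" "normal_hom \<gamma>'" and "\<gamma> \<circ> e = \<gamma>' \<circ> e"
  shows "\<gamma> = \<gamma>'"
proof
  fix x
  obtain \<S> where \<S>: "is_join {m. \<exists>S\<in>\<S>. is_meet (e ` S) m} x"
    using canonical_extension_density[OF e] by blast
  let ?M = "{m. \<exists>S\<in>\<S>. is_meet (e ` S) m}"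
  have "\<gamma> m = \<gamma>' m" if "is_meet (e ` S) m" for S m
  proof -
    have "is_meet (\<gamma> ` e ` S) (\<gamma> m)" "is_meet (\<gamma>' ` e ` S) (\<gamma>' m)"
      using assms(2,3) that unfolding normal_hom_def by blast+
    moreover have "\<gamma> ` e ` S = \<gamma>' ` e ` S"
      by (simp only: image_comp assms(4))
    ultimately show ?thesis
      using is_meet_unique[of "\<gamma> ` e ` S" "\<gamma> m" "\<gamma>' m"] by simp
  qed
  then have "\<gamma> ` ?M = \<gamma>' ` ?M"
    by (intro image_cong) auto
  moreover have "is_join (\<gamma> ` ?M) (\<gamma> x)" "is_join (\<gamma>' ` ?M) (\<gamma>' x)"
    using assms(2,3) \<S> unfolding normal_hom_def by blast+
  ultimately show "\<gamma> x = \<gamma>' x"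
    using is_join_unique[of "\<gamma> ` ?M" "\<gamma> x" "\<gamma>' x"] by simp
qed

lemma canonical_extension_meet_nonzero:
  fixes e :: "'a::bal \<Rightarrow> 'b::basic" and \<chi> :: "'a \<Rightarrow> real"
  assumes e: "canonical_extension e" and \<chi>: "bal_hom \<chi>"
    and m: "is_meet (e ` {a. 0 \<le> a \<and> a \<le> 1 \<and> \<chi> a = 1}) m"
  shows "m \<noteq> 0"
proof
  assume "m = 0"
  let ?S = "{a. 0 \<le> a \<and> a \<le> 1 \<and> \<chi> a = 1}" and ?h = "(1/2::real) *\<^sub>R (1::'a)"
  have eh: "bal_hom e" and inj: "inj e"
    using e by (simp_all add: canonical_extension_def)
  have jh: "is_join (e ` {?h}) (e ?h)"
    by (rule is_join_greatest) simp_all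
  have le: "m + of_real (1/2) \<le> e ?h"
    using \<open>m = 0\<close> by (simp add: bal_hom_scaleR_one[OF eh] of_real_def)
  obtain S' T' m' j' where S': "finite S'" "S' \<subseteq> ?S" and "finite T'" and T': "T' \<subseteq> {?h}"
    and m': "is_meet (e ` S') m'" and j': "is_join (e ` T') j'" and "m' \<le> j'"
    by (rule canonical_extension_compactness[OF e _ m jh le]) simp_all
  have "S' \<noteq> {}"
    using m' bal_not_is_meet_empty[of m'] by auto
  have "T' \<noteq> {}"
    using j' bal_not_is_join_empty[of j'] by auto
  with T' have "T' = {?h}"
    by blast
  have "\<chi> ` S' = {1}"
    using S'(2) \<open>S' \<noteq> {}\<close> by auto
  then have "\<chi> (Inf_fin S') = 1"
    using S'(1) \<open>S' \<noteq> {}\<close> by (simp add: bal_hom_Inf_fin[OF \<chi>])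
  have "is_meet (e ` S') (e (Inf_fin S'))"
    using S'(1) \<open>S' \<noteq> {}\<close> by (rule bal_hom_is_meet_Inf_fin[OF eh])
  with m' have "m' = e (Inf_fin S')"
    by (rule is_meet_unique)
  moreover have "j' = e ?h"
    using j' jh \<open>T' = {?h}\<close> by (simp add: is_join_unique)
  ultimately have "Inf_fin S' \<le> ?h"
    using \<open>m' \<le> j'\<close> by (simp add: bal_hom_le_iff[OF eh inj])
  then have "\<chi> (Inf_fin S') \<le> \<chi> ?h"
    by (rule bal_hom_mono[OF \<chi>])
  with \<open>\<chi> (Inf_fin S') = 1\<close> show False
    by (simp add: bal_hom_scaleR_one[OF \<chi>])
qed

lemma canonical_extension_real_point:
  fixes e :: "'a::bal \<Rightarrow> 'b::basic" and \<chi> :: "'a \<Rightarrow> real"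
  assumes e: "canonical_extension e" and \<chi>: "bal_hom \<chi>"
  shows "\<exists>p. idem_atom p \<and> atom_val p \<circ> e = \<chi>"
proof -
  define S where "S = {a. 0 \<le> a \<and> a \<le> 1 \<and> \<chi> a = 1}"
  have eh: "bal_hom e"
    using e by (simp add: canonical_extension_def)
  have e_nonneg: "0 \<le> e a" if "a \<in> S" for a
    using that bal_hom_mono[OF eh, of 0 a] by (simp add: S_def bal_hom_zero[OF eh])
  have "1 \<in> S"
    using \<chi> by (simp add: S_def bal_hom_one)
  then obtain m where m: "is_meet (e ` S) m"
    using basic_is_meet_exists[of "e ` S" 0] e_nonneg by blast
  have "0 \<le> m"
    using m e_nonneg unfolding is_meet_def by blast
  then obtain p where p: "idem_atom p" "p * m \<noteq> 0"
    using idem_atom_below canonical_extension_meet_nonzero[OF e \<chi> m[unfolded S_def]] by blast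
  have "0 < atom_val p m"
    using p atom_val_nonneg[OF p(1) \<open>0 \<le> m\<close>] idem_atom_mult[OF p(1), of m]
    by (auto simp: order_le_neq_trans)
  moreover have "atom_val p m \<le> (atom_val p \<circ> e) b" if "0 \<le> b" "b \<le> 1" "\<chi> b = 1" for b
    using that m atom_val_mono[OF p(1)] unfolding S_def is_meet_def by simp
  ultimately have "atom_val p \<circ> e = \<chi>"
    using bal_hom_real_eq_if_bounded_below[OF \<chi> bal_hom_comp[OF eh bal_hom_atom_val[OF p(1)]]]
    by blast
  with p(1) show ?thesis
    by blast
qed

lemma canonical_extension_normal_hom_exists:
  fixes e :: "'a::bal \<Rightarrow> 'b::basic" and \<alpha> :: "'a \<Rightarrow> 'c::basic"
  assumes e: "canonical_extension e" and \<alpha>: "bal_hom \<alpha>"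
  obtains \<gamma> where "normal_hom \<gamma>" "\<gamma> \<circ> e = \<alpha>"
proof -
  have "\<forall>q. \<exists>p. idem_atom q \<longrightarrow> idem_atom p \<and> atom_val p \<circ> e = atom_val q \<circ> \<alpha>"
  proof
    fix q :: 'c
    show "\<exists>p. idem_atom q \<longrightarrow> idem_atom p \<and> atom_val p \<circ> e = atom_val q \<circ> \<alpha>"
      using canonical_extension_real_point[OF e bal_hom_comp[OF \<alpha> bal_hom_atom_val]] by blast
  qed
  from choice[OF this] obtain P
    where "\<forall>q. idem_atom q \<longrightarrow> idem_atom (P q) \<and> atom_val (P q) \<circ> e = atom_val q \<circ> \<alpha>"
    by blast
  then have P: "\<And>q. idem_atom q \<Longrightarrow> idem_atom (P q) \<and> atom_val (P q) \<circ> e = atom_val q \<circ> \<alpha>"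
    by blast
  then obtain \<gamma> :: "'b \<Rightarrow> 'c" where \<gamma>: "normal_hom \<gamma>"
    and \<gamma>_val: "\<And>q x. idem_atom q \<Longrightarrow> atom_val q (\<gamma> x) = atom_val (P q) x"
    using exists_normal_hom_atom_val[of P] by blast
  have "\<gamma> (e a) = \<alpha> a" for a
  proof (rule atom_val_ext)
    fix q :: 'c assume q: "idem_atom q"
    then show "atom_val q (\<gamma> (e a)) = atom_val q (\<alpha> a)"
      using P[OF q] by (simp add: \<gamma>_val fun_eq_iff)
  qed
  then have "\<gamma> \<circ> e = \<alpha>"
    by auto
  with \<gamma> show ?thesis
    by (rule that)
qed

theorem theorem4p3:
  fixes e :: "'a::bal \<Rightarrow> 'b::basic"
  assumes "canonical_extension e"
  shows "\<forall>\<alpha> :: 'a \<Rightarrow> 'c::basic. bal_hom \<alpha> \<longrightarrow>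
           (\<exists>!\<gamma> :: 'b \<Rightarrow> 'c. normal_hom \<gamma> \<and> \<gamma> \<circ> e = \<alpha>)"
proof (intro allI impI)
  fix \<alpha> :: "'a \<Rightarrow> 'c::basic"
  assume "bal_hom \<alpha>"
  then obtain \<gamma> :: "'b \<Rightarrow> 'c" where \<gamma>: "normal_hom \<gamma>" "\<gamma> \<circ> e = \<alpha>"
    by (rule canonical_extension_normal_hom_exists[OF assms])
  show "\<exists>!\<gamma>. normal_hom \<gamma> \<and> \<gamma> \<circ> e = \<alpha>"
  proof (rule ex1I[of _ \<gamma>])
    show "normal_hom \<gamma> \<and> \<gamma> \<circ> e = \<alpha>"
      using \<gamma> by blast
    show "\<gamma>' = \<gamma>" if "normal_hom \<gamma>' \<and> \<gamma>' \<circ> e = \<alpha>" for \<gamma>'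
      using canonical_extension_normal_hom_unique[OF assms, of \<gamma>' \<gamma>] that \<gamma> by simp
  qed
qed

end
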